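(* Let $G$ be a graph of order $n\geq 3$ with no full vertex (i.e., no vertex of degree $n-1$). Then $\mathcal{C}_f(G)\geq 2\,d_f(G)$.
   Context: All graphs are finite and simple; $G=(V,E)$, $N(v)$ is the open neighborhood of $v$. A dominating set is $D\subseteq V$ such that every vertex of $V\setminus D$ has a neighbor in $D$. For an integer $k\geq 1$, a $k$-fair dominating set ($kFD$-set) is a dominating set $D$ such that $|N(v)\cap D|=k$ for every $v\in V\setminus D$. A fair dominating set (FD-set) is a $kFD$-set for some integer $k\geq 1$. A fair domatic partition of $G$ is a partition of $V$ into fair dominating sets; the fair domatic number $d_f(G)$ is the maximum number of parts of a fair domatic partition. A fair coalition consists of two disjoint sets $A_1,A_2\subseteq V$, neither of which is a fair dominating set, such that $A_1\cup A_2$ is a fair dominating set. A fair coalition partition ($fc$-partition) of $G$ is a partition $\Upsilon=\{A_1,\dots,A_k\}$ of $V$ such that every $A_i$ is either a singleton fair dominating set of $G$, or is not a fair dominating set and forms a fair coalition with some other non-fair-dominating set $A_j\in\Upsilon$. The fair coalition number $\mathcal{C}_f(G)$ is the maximum number of parts of an $fc$-partition of $G$. *)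

theory Defs
  imports Main "HOL-Library.Disjoint_Sets"
begin

definition simple_graph :: "'a set \<Rightarrow> ('a \<Rightarrow> 'a \<Rightarrow> bool) \<Rightarrow> bool" where
  "simple_graph V E \<longleftrightarrow> finite V \<and>
     (\<forall>u v. E u v \<longrightarrow> u \<in> V \<and> v \<in> V \<and> u \<noteq> v \<and> E v u)"

definition nbhd :: "'a set \<Rightarrow> ('a \<Rightarrow> 'a \<Rightarrow> bool) \<Rightarrow> 'a \<Rightarrow> 'a set" where
  "nbhd V E v = {u \<in> V. E v u}"

definition dominating_set :: "'a set \<Rightarrow> ('a \<Rightarrow> 'a \<Rightarrow> bool) \<Rightarrow> 'a set \<Rightarrow> bool" where
  "dominating_set V E D \<longleftrightarrow> D \<subseteq> V \<and> (\<forall>v \<in> V - D. \<exists>u \<in> D. E v u)"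

definition k_fair_dominating :: "'a set \<Rightarrow> ('a \<Rightarrow> 'a \<Rightarrow> bool) \<Rightarrow> nat \<Rightarrow> 'a set \<Rightarrow> bool" where
  "k_fair_dominating V E k D \<longleftrightarrow> dominating_set V E D \<and>
     (\<forall>v \<in> V - D. card (nbhd V E v \<inter> D) = k)"

definition fair_dominating :: "'a set \<Rightarrow> ('a \<Rightarrow> 'a \<Rightarrow> bool) \<Rightarrow> 'a set \<Rightarrow> bool" where
  "fair_dominating V E D \<longleftrightarrow> (\<exists>k \<ge> 1. k_fair_dominating V E k D)"

definition fair_domatic_partition :: "'a set \<Rightarrow> ('a \<Rightarrow> 'a \<Rightarrow> bool) \<Rightarrow> 'a set set \<Rightarrow> bool" where
  "fair_domatic_partition V E P \<longleftrightarrow> partition_on V P \<and> (\<forall>A \<in> P. fair_dominating V E A)"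

definition fair_domatic_number :: "'a set \<Rightarrow> ('a \<Rightarrow> 'a \<Rightarrow> bool) \<Rightarrow> nat" where
  "fair_domatic_number V E = Max {card P | P. fair_domatic_partition V E P}"

definition fair_coalition :: "'a set \<Rightarrow> ('a \<Rightarrow> 'a \<Rightarrow> bool) \<Rightarrow> 'a set \<Rightarrow> 'a set \<Rightarrow> bool" where
  "fair_coalition V E A1 A2 \<longleftrightarrow> A1 \<inter> A2 = {} \<and>
     \<not> fair_dominating V E A1 \<and> \<not> fair_dominating V E A2 \<and> fair_dominating V E (A1 \<union> A2)"

definition fc_partition :: "'a set \<Rightarrow> ('a \<Rightarrow> 'a \<Rightarrow> bool) \<Rightarrow> 'a set set \<Rightarrow> bool" where
  "fc_partition V E P \<longleftrightarrow> partition_on V P \<and>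
     (\<forall>A \<in> P. (fair_dominating V E A \<and> card A = 1) \<or>
               (\<not> fair_dominating V E A \<and> (\<exists>B \<in> P. fair_coalition V E A B)))"

definition fair_coalition_number :: "'a set \<Rightarrow> ('a \<Rightarrow> 'a \<Rightarrow> bool) \<Rightarrow> nat" where
  "fair_coalition_number V E = Max {card P | P. fc_partition V E P}"

end

(* If d_f(G) = k >= 2, fix a fair domatic partition D_1, ..., D_k. The other parts dominate D_i,
   so every vertex of D_i has a neighbour outside D_i. If D_i - {a} stayed fair dominating for
   every a in D_i, comparing neighbour counts would force every outside vertex to be adjacent to
   all of D_i and then every vertex of D_i to be full. Hence some a_i has D_i - {a_i} not fair
   dominating; since without full vertices no singleton is fair dominating, {a_i} and D_i - {a_i}
   form a fair coalition, and the 2k pieces form an fc-partition.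
   If d_f(G) <= 1 it suffices to find an fc-partition with two parts; one with two or three parts
   is cut out of a minimum fair dominating set M, one of its vertices a, and V - M. *)

theory Submission
  imports Defs
begin

definition full_vertex :: "'a set \<Rightarrow> ('a \<Rightarrow> 'a \<Rightarrow> bool) \<Rightarrow> 'a \<Rightarrow> bool" where
  "full_vertex V E v \<longleftrightarrow> v \<in> V \<and> (\<forall>u \<in> V - {v}. E v u)"

lemma simple_graph_finite: "simple_graph V E \<Longrightarrow> finite V"
  unfolding simple_graph_def by blast

lemma simple_graph_adjD: "simple_graph V E \<Longrightarrow> E u v \<Longrightarrow> u \<in> V \<and> v \<in> V \<and> u \<noteq> v"
  unfolding simple_graph_def by blast

lemma simple_graph_sym: "simple_graph V E \<Longrightarrow> E u v \<Longrightarrow> E v u"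
  unfolding simple_graph_def by blast

lemma card_nbhd_full_vertex:
  assumes "simple_graph V E" and "full_vertex V E v"
  shows "card (nbhd V E v) = card V - 1"
proof -
  have "nbhd V E v = V - {v}"
    using assms(2) simple_graph_adjD[OF assms(1), of v] unfolding full_vertex_def nbhd_def by blast
  then show ?thesis
    using assms simple_graph_finite by (simp add: full_vertex_def)
qed

lemma fair_dominating_subset: "fair_dominating V E D \<Longrightarrow> D \<subseteq> V"
  by (auto simp: fair_dominating_def k_fair_dominating_def dominating_set_def)

lemma fair_dominating_space: "fair_dominating V E V"
  by (auto simp: fair_dominating_def k_fair_dominating_def dominating_set_def)

lemma fair_dominating_nonempty: "V \<noteq> {} \<Longrightarrow> fair_dominating V E D \<Longrightarrow> D \<noteq> {}"
  by (auto simp: fair_dominating_def k_fair_dominating_def dominating_set_def)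

lemma fair_dominating_imp_dominating_set: "fair_dominating V E D \<Longrightarrow> dominating_set V E D"
  by (auto simp: fair_dominating_def k_fair_dominating_def)

lemma fair_dominating_card_nbhd_eq:
  assumes "fair_dominating V E D" and "u \<in> V - D" and "v \<in> V - D"
  shows "card (nbhd V E u \<inter> D) = card (nbhd V E v \<inter> D)"
  using assms by (auto simp: fair_dominating_def k_fair_dominating_def)

lemma dominating_set_mono:
  "dominating_set V E D \<Longrightarrow> D \<subseteq> D' \<Longrightarrow> D' \<subseteq> V \<Longrightarrow> dominating_set V E D'"
  unfolding dominating_set_def by blast

lemma singleton_not_fair_dominating:
  assumes "simple_graph V E" and "\<forall>v \<in> V. \<not> full_vertex V E v"
  shows "\<not> fair_dominating V E {a}"
proof
  assume "fair_dominating V E {a}"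
  then have "dominating_set V E {a}"
    by (rule fair_dominating_imp_dominating_set)
  then have "full_vertex V E a"
    using simple_graph_sym[OF assms(1)] unfolding dominating_set_def full_vertex_def by blast
  then show False
    using assms(2) full_vertex_def by metis
qed

lemma adjacent_if_delete_fair_dominating:
  assumes g: "simple_graph V E"
    and D: "fair_dominating V E D" and Da: "fair_dominating V E (D - {a})"
    and a: "a \<in> D" and y0: "y0 \<in> V - D" "E y0 a" and y: "y \<in> V - D"
  shows "E y a"
proof (rule ccontr)
  \<comment> \<open>deleting a lowers the count of y0 by one, but would not change that of y\<close>
  assume "\<not> E y a"
  then have y_eq: "nbhd V E y \<inter> (D - {a}) = nbhd V E y \<inter> D"
    by (auto simp: nbhd_def)
  have y0_eq: "nbhd V E y0 \<inter> (D - {a}) = (nbhd V E y0 \<inter> D) - {a}"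
    by blast
  have a_nbhd: "a \<in> nbhd V E y0 \<inter> D"
    using a y0 fair_dominating_subset[OF D] by (auto simp: nbhd_def)
  have "finite D"
    using finite_subset[OF fair_dominating_subset[OF D] simple_graph_finite[OF g]] .
  then have "card (nbhd V E y0 \<inter> (D - {a})) + 1 = card (nbhd V E y0 \<inter> D)"
    using a_nbhd unfolding y0_eq by (metis card_Suc_Diff1 finite_Int Suc_eq_plus1)
  moreover have "card (nbhd V E y \<inter> (D - {a})) = card (nbhd V E y0 \<inter> (D - {a}))"
    using fair_dominating_card_nbhd_eq[OF Da] y y0 by blast
  moreover have "card (nbhd V E y \<inter> D) = card (nbhd V E y0 \<inter> D)"
    using fair_dominating_card_nbhd_eq[OF D] y y0 by blast
  ultimately show False
    unfolding y_eq by linarith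
qed

lemma ex_vertex_delete_not_fair_dominating:
  assumes g: "simple_graph V E" and nf: "\<forall>v \<in> V. \<not> full_vertex V E v"
    and D: "fair_dominating V E D" and "D \<noteq> {}"
    and compl: "dominating_set V E (V - D)"
  shows "\<exists>a \<in> D. \<not> fair_dominating V E (D - {a})"
proof (rule ccontr)
  assume "\<not> ?thesis"
  then have del: "fair_dominating V E (D - {a})" if "a \<in> D" for a
    using that by blast
  have DV: "D \<subseteq> V"
    using D by (rule fair_dominating_subset)
  have outer_nbr: "\<exists>y \<in> V - D. E a y" if "a \<in> D" for a
    using compl that DV by (auto simp: dominating_set_def)
  have complete: "E y a" if a: "a \<in> D" and y: "y \<in> V - D" for a y
  proof -
    obtain y0 where "y0 \<in> V - D" "E a y0"
      using outer_nbr[OF a] by blast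
    then show ?thesis
      using adjacent_if_delete_fair_dominating[OF g D del[OF a] a _ _ y] simple_graph_sym[OF g]
      by blast
  qed
  obtain a where a: "a \<in> D"
    using \<open>D \<noteq> {}\<close> by blast
  obtain x where x: "x \<in> V - D"
    using outer_nbr[OF a] by blast
  have "nbhd V E x \<inter> (D - {a}) = D - {a}"
    using complete x DV simple_graph_sym[OF g] unfolding nbhd_def by blast
  moreover have "card (nbhd V E a \<inter> (D - {a})) = card (nbhd V E x \<inter> (D - {a}))"
    using fair_dominating_card_nbhd_eq[OF del[OF a]] a x DV by blast
  moreover have "finite D"
    using finite_subset[OF DV simple_graph_finite[OF g]] .
  ultimately have "nbhd V E a \<inter> (D - {a}) = D - {a}"
    by (metis card_subset_eq finite_Diff Int_lower2)
  then have "full_vertex V E a"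
    using complete a DV simple_graph_sym[OF g] unfolding full_vertex_def nbhd_def by blast
  then show False
    using nf a DV by blast
qed

lemma partition_on_UN_refinement:
  assumes P: "partition_on A P" and F: "\<And>p. p \<in> P \<Longrightarrow> partition_on p (F p)"
  shows "partition_on A (\<Union>p \<in> P. F p)"
proof (rule partition_onI)
  show "\<Union>(\<Union>p \<in> P. F p) = A"
    using partition_onD1[OF P] partition_onD1[OF F] by blast
  show "{} \<notin> (\<Union>p \<in> P. F p)"
    using partition_onD3[OF F] by blast
  fix q q' assume "q \<in> (\<Union>p \<in> P. F p)" "q' \<in> (\<Union>p \<in> P. F p)" "q \<noteq> q'"
  then obtain p p' where p: "p \<in> P" "q \<in> F p" and p': "p' \<in> P" "q' \<in> F p'"
    by blast
  show "disjnt q q'"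
  proof (cases "p = p'")
    case True
    then show ?thesis
      using disjointD[OF partition_onD2[OF F[OF p(1)]]] p p' \<open>q \<noteq> q'\<close>
      unfolding disjnt_def by blast
  next
    case False
    then have "disjnt p p'"
      using disjointD[OF partition_onD2[OF P] p(1) p'(1)] unfolding disjnt_def by blast
    moreover have "q \<subseteq> p" "q' \<subseteq> p'"
      using partition_onD1[OF F[OF p(1)]] partition_onD1[OF F[OF p'(1)]] p p' by blast+
    ultimately show ?thesis
      by (meson disjnt_subset1 disjnt_subset2)
  qed
qed

lemma card_UN_refinement:
  assumes P: "partition_on A P" "finite P"
    and F: "\<And>p. p \<in> P \<Longrightarrow> partition_on p (F p) \<and> finite (F p)"
  shows "card (\<Union>p \<in> P. F p) = (\<Sum>p \<in> P. card (F p))"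
proof (rule card_UN_disjoint)
  show "\<forall>p \<in> P. \<forall>p' \<in> P. p \<noteq> p' \<longrightarrow> F p \<inter> F p' = {}"
  proof (intro ballI impI)
    fix p p' assume p: "p \<in> P" "p' \<in> P" "p \<noteq> p'"
    then have "p \<inter> p' = {}"
      using disjointD[OF partition_onD2[OF P(1)]] by blast
    moreover have "q \<noteq> {}" "q \<subseteq> p" if "q \<in> F p" for q
      using that F[OF p(1)] by (auto dest: partition_onD1 partition_onD3)
    moreover have "q \<subseteq> p'" if "q \<in> F p'" for q
      using that F[OF p(2)] by (auto dest: partition_onD1)
    ultimately show "F p \<inter> F p' = {}"
      by blast
  qed
qed (use assms in auto)

lemma partition_on_split_off_point:
  "x \<in> p \<Longrightarrow> p - {x} \<noteq> {} \<Longrightarrow> partition_on p {{x}, p - {x}}"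
  by (auto intro!: partition_onI simp: disjnt_def)

lemma fair_coalition_sym: "fair_coalition V E A B \<Longrightarrow> fair_coalition V E B A"
  by (auto simp: fair_coalition_def Un_commute)

lemma fair_coalition_nonempty: "fair_coalition V E A B \<Longrightarrow> A \<noteq> {} \<and> B \<noteq> {}"
  by (auto simp: fair_coalition_def)

lemma fc_partitionI:
  assumes "partition_on V Q" and "\<And>A. A \<in> Q \<Longrightarrow> \<exists>B \<in> Q. fair_coalition V E A B"
  shows "fc_partition V E Q"
  using assms by (auto simp: fc_partition_def fair_coalition_def)

lemma fc_partition_pair:
  assumes "fair_coalition V E A B" and "A \<union> B = V"
  shows "fc_partition V E {A, B}" and "card {A, B} = 2"
proof -
  have "A \<inter> B = {}" "A \<noteq> {}" "B \<noteq> {}"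
    using assms(1) fair_coalition_nonempty[OF assms(1)] unfolding fair_coalition_def by blast+
  then have "partition_on V {A, B}" and "A \<noteq> B"
    using assms(2) by (auto intro!: partition_onI simp: disjnt_def)
  then show "fc_partition V E {A, B}"
    using assms(1) fair_coalition_sym by (intro fc_partitionI) blast+
  show "card {A, B} = 2"
    using \<open>A \<noteq> B\<close> by simp
qed

lemma fc_partition_split_off_points:
  assumes P: "partition_on V P" "finite P"
    and f: "\<And>D. D \<in> P \<Longrightarrow> f D \<in> D \<and> fair_coalition V E {f D} (D - {f D})"
  defines "Q \<equiv> \<Union>D \<in> P. {{f D}, D - {f D}}"
  shows "fc_partition V E Q" and "card Q = 2 * card P"
proof -
  have split: "partition_on D {{f D}, D - {f D}} \<and> finite {{f D}, D - {f D}}" if "D \<in> P" for D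
  proof -
    have "D - {f D} \<noteq> {}"
      using fair_coalition_nonempty f[OF that] by blast
    then have "partition_on D {{f D}, D - {f D}}"
      using f[OF that] by (intro partition_on_split_off_point) auto
    then show ?thesis
      by simp
  qed
  show "fc_partition V E Q"
  proof (rule fc_partitionI)
    show "partition_on V Q"
      unfolding Q_def using P(1) split by (blast intro: partition_on_UN_refinement)
  next
    fix A assume "A \<in> Q"
    then obtain D where D: "D \<in> P" "A = {f D} \<or> A = D - {f D}"
      unfolding Q_def by blast
    moreover have "{f D} \<in> Q" "D - {f D} \<in> Q"
      using D(1) unfolding Q_def by blast+
    ultimately show "\<exists>B \<in> Q. fair_coalition V E A B"
      using f[OF D(1)] fair_coalition_sym by blast
  qed
  have "{f D} \<noteq> D - {f D}" for D
    by blast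
  then have "card {{f D}, D - {f D}} = 2" for D
    by simp
  then show "card Q = 2 * card P"
    unfolding Q_def using card_UN_refinement[OF P split] by simp
qed

lemma ex_minimal_fair_dominating:
  assumes "finite V"
  obtains M where "fair_dominating V E M" and "\<And>a. a \<in> M \<Longrightarrow> \<not> fair_dominating V E (M - {a})"
proof -
  obtain M where M: "fair_dominating V E M"
    and least: "\<And>S. fair_dominating V E S \<Longrightarrow> card M \<le> card S"
    using ex_has_least_nat[of "fair_dominating V E" V card] fair_dominating_space by metis
  have "finite M"
    using fair_dominating_subset[OF M] assms finite_subset by blast
  then have "\<not> fair_dominating V E (M - {a})" if "a \<in> M" for a
    using least[of "M - {a}"] card_Diff1_less[OF _ that] by fastforce
  then show ?thesis
    using that M by blast
qed

lemma ex_fc_partition_double: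
  assumes g: "simple_graph V E" and nf: "\<forall>v \<in> V. \<not> full_vertex V E v"
    and P: "fair_domatic_partition V E P" and "2 \<le> card P"
  shows "\<exists>Q. fc_partition V E Q \<and> card Q = 2 * card P"
proof -
  have part: "partition_on V P" and fd: "\<And>D. D \<in> P \<Longrightarrow> fair_dominating V E D"
    using P by (auto simp: fair_domatic_partition_def)
  have "finite P"
    using finite_elements[OF simple_graph_finite[OF g] part] .
  have "\<exists>a \<in> D. \<not> fair_dominating V E (D - {a})" if D: "D \<in> P" for D
  proof -
    have "\<not> P \<subseteq> {D}"
    proof
      assume "P \<subseteq> {D}"
      then have "card P \<le> 1"
        using card_mono[of "{D}" P] by simp
      then show False
        using \<open>2 \<le> card P\<close> by simp
    qed
    then obtain D' where D': "D' \<in> P" "D' \<noteq> D"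
      by blast
    then have "D' \<subseteq> V - D"
      using partition_onD1[OF part] disjointD[OF partition_onD2[OF part] D'(1) D] by blast
    then have "dominating_set V E (V - D)"
      using fair_dominating_imp_dominating_set[OF fd[OF D'(1)]] dominating_set_mono by blast
    moreover have "D \<noteq> {}"
      using partition_onD3[OF part] D by blast
    ultimately show ?thesis
      using ex_vertex_delete_not_fair_dominating[OF g nf fd[OF D]] by blast
  qed
  then obtain f where f: "\<And>D. D \<in> P \<Longrightarrow> f D \<in> D \<and> \<not> fair_dominating V E (D - {f D})"
    by metis
  have "fair_coalition V E {f D} (D - {f D})" if "D \<in> P" for D
    using f[OF that] fd[OF that] singleton_not_fair_dominating[OF g nf]
    by (auto simp: fair_coalition_def insert_absorb)
  then show ?thesis
    using fc_partition_split_off_points[OF part \<open>finite P\<close>] f by blast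
qed

lemma ex_fc_partition_card_ge_2:
  assumes g: "simple_graph V E" and nf: "\<forall>v \<in> V. \<not> full_vertex V E v" and "V \<noteq> {}"
  shows "\<exists>Q. fc_partition V E Q \<and> 2 \<le> card Q"
proof -
  obtain M where M: "fair_dominating V E M"
    and minimal: "\<And>a. a \<in> M \<Longrightarrow> \<not> fair_dominating V E (M - {a})"
    using ex_minimal_fair_dominating[OF simple_graph_finite[OF g]] by blast
  obtain a where a: "a \<in> M"
    using fair_dominating_nonempty[OF \<open>V \<noteq> {}\<close> M] by blast
  have MV: "M \<subseteq> V"
    using M by (rule fair_dominating_subset)
  have na: "\<not> fair_dominating V E {a}"
    using singleton_not_fair_dominating[OF g nf] .
  have coal: "fair_coalition V E {a} (M - {a})"
    using M a na minimal[OF a] by (auto simp: fair_coalition_def insert_absorb)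
  define R where "R = V - M"
  consider "fair_dominating V E R" | "\<not> fair_dominating V E (insert a R)"
    | "\<not> fair_dominating V E R" "fair_dominating V E (insert a R)"
    by blast
  then show ?thesis
  proof cases
    case 1
    have "partition_on V {M, R}" "M \<noteq> R"
      using fair_dominating_nonempty[OF \<open>V \<noteq> {}\<close> 1] a MV unfolding R_def
      by (auto intro!: partition_onI simp: disjnt_def)
    then have "fair_domatic_partition V E {M, R}" "card {M, R} = 2"
      using M 1 by (auto simp: fair_domatic_partition_def)
    then show ?thesis
      using ex_fc_partition_double[OF g nf] by fastforce
  next
    case 2
    have union: "(M - {a}) \<union> insert a R = V"
      using a MV unfolding R_def by blast
    have "(M - {a}) \<inter> insert a R = {}"
      unfolding R_def by blast
    then have "fair_coalition V E (M - {a}) (insert a R)"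
      unfolding fair_coalition_def union using 2 minimal[OF a] fair_dominating_space by blast
    then show ?thesis
      using fc_partition_pair[OF _ union] by (metis order_refl)
  next
    case 3
    have "R \<noteq> {}"
      using 3 na by force
    have "R \<inter> {a} = {}" and union: "R \<union> {a} = insert a R"
      using a unfolding R_def by blast+
    then have "fair_coalition V E R {a}"
      unfolding fair_coalition_def union using 3 na by blast
    have part: "partition_on V {{a}, M - {a}, R}"
    proof (rule partition_onI)
      show "\<Union>{{a}, M - {a}, R} = V"
        using a MV unfolding R_def by blast
      show "disjnt p q" if "p \<in> {{a}, M - {a}, R}" "q \<in> {{a}, M - {a}, R}" "p \<noteq> q" for p q
        using that a unfolding disjnt_def R_def by (elim insertE emptyE) auto
      show "{} \<notin> {{a}, M - {a}, R}"
        using \<open>R \<noteq> {}\<close> fair_coalition_nonempty[OF coal] by blast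
    qed
    have "fc_partition V E {{a}, M - {a}, R}"
    proof (rule fc_partitionI[OF part])
      fix A assume "A \<in> {{a}, M - {a}, R}"
      then show "\<exists>B \<in> {{a}, M - {a}, R}. fair_coalition V E A B"
        using coal fair_coalition_sym[OF coal] \<open>fair_coalition V E R {a}\<close> by blast
    qed
    moreover have "{a} \<noteq> M - {a}" "{a} \<noteq> R" "M - {a} \<noteq> R"
      using a fair_coalition_nonempty[OF coal] unfolding R_def by blast+
    then have "card {{a}, M - {a}, R} = 3"
      by simp
    ultimately show ?thesis
      by fastforce
  qed
qed

lemma fair_domatic_number_attained:
  assumes "finite V" and "V \<noteq> {}"
  obtains P where "fair_domatic_partition V E P" and "card P = fair_domatic_number V E"
proof -
  let ?S = "{card P | P. fair_domatic_partition V E P}"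
  have "?S \<subseteq> card ` {P. partition_on V P}"
    by (auto simp: fair_domatic_partition_def)
  then have "finite ?S"
    using finitely_many_partition_on[OF assms(1)] finite_subset by blast
  moreover have "fair_domatic_partition V E {V}"
    using partition_on_space[OF assms(2)] fair_dominating_space[of V E]
    by (simp add: fair_domatic_partition_def)
  then have "card {V} \<in> ?S"
    by blast
  ultimately have "Max ?S \<in> ?S"
    using Max_in by blast
  then show ?thesis
    using that unfolding fair_domatic_number_def by auto
qed

lemma card_le_fair_coalition_number:
  assumes "finite V" and "fc_partition V E Q"
  shows "card Q \<le> fair_coalition_number V E"
proof -
  let ?S = "{card Q | Q. fc_partition V E Q}"
  have "?S \<subseteq> card ` {Q. partition_on V Q}"
    by (auto simp: fc_partition_def)
  then have "finite ?S"
    using finitely_many_partition_on[OF assms(1)] finite_subset by blast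
  then show ?thesis
    using assms(2) unfolding fair_coalition_number_def by (auto intro: Max_ge)
qed

theorem theorem2p4:
  fixes V :: "'a set" and E :: "'a \<Rightarrow> 'a \<Rightarrow> bool"
  assumes "simple_graph V E"
    and "card V \<ge> 3"
    and "\<forall>v \<in> V. card (nbhd V E v) \<noteq> card V - 1"
  shows "fair_coalition_number V E \<ge> 2 * fair_domatic_number V E"
proof -
  have fin: "finite V" and ne: "V \<noteq> {}"
    using simple_graph_finite[OF assms(1)] assms(2) by auto
  have nf: "\<forall>v \<in> V. \<not> full_vertex V E v"
    using assms(3) card_nbhd_full_vertex[OF assms(1)] by blast
  obtain P where P: "fair_domatic_partition V E P" "card P = fair_domatic_number V E"
    using fair_domatic_number_attained[OF fin ne] by blast
  obtain Q where Q: "fc_partition V E Q" "2 * card P \<le> card Q"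
  proof (cases "2 \<le> card P")
    case True
    then show ?thesis
      using ex_fc_partition_double[OF assms(1) nf P(1)] that by fastforce
  next
    case False
    then show ?thesis
      using ex_fc_partition_card_ge_2[OF assms(1) nf ne] that by fastforce
  qed
  then show ?thesis
    using card_le_fair_coalition_number[OF fin] P(2) by fastforce
qed

end
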